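(* Let $V$ be a finite nonempty set, $U\subseteq V$, $\hat x$ a maximally specific partial function on $P_V$, $\hat x'=\hat x|_{P_U}$, and $y\in X_U[\hat x']$. Then, with $\tau^y_{\mathrm{out}},\tau^y_{\mathrm{in}},\tau^y_{\mathrm{bd}}$ as defined in the context: (1) For $\tau=\tau^y_{\mathrm{out}}$, let $P'_{01}=\{pq\in(V\setminus U)\times U\mid\exists r\in U:\hat x_{pr}\neq0\wedge y_{rq}=1\}\setminus\hat x^{-1}(1)$, $P'_{10}=P''_{10}=(U\times(V\setminus U))\setminus\hat x^{-1}(0)$ and $P''_{01}=((V\setminus U)\times U)\setminus\hat x^{-1}(1)$. Then $P_{01}[\tau]\cap\delta(U)\subseteq P'_{01}\subseteq P''_{01}$ and $P_{10}[\tau]\cap\delta(U)\subseteq P'_{10}=P''_{10}$. (2) For $\tau=\tau^y_{\mathrm{in}}$, let $P'_{01}=\{pq\in U\times(V\setminus U)\mid\exists r\in U: y_{pr}=1\wedge\hat x_{rq}\neq0\}\setminus\hat x^{-1}(1)$, $P'_{10}=P''_{10}=((V\setminus U)\times U)\setminus\hat x^{-1}(0)$ and $P''_{01}=(U\times(V\setminus U))\setminus\hat x^{-1}(1)$. Then $P_{01}[\tau]\cap\delta(U)\subseteq P'_{01}\subseteq P''_{01}$ and $P_{10}[\tau]\cap\delta(U)\subseteq P'_{10}=P''_{10}$. (3) For $\tau=\tau^y_{\mathrm{bd}}$, let $P'_{01}=P''_{01}=\emptyset$ and $P'_{10}=P''_{10}=\delta(U)\setminus\hat x^{-1}(0)$.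 Then $P_{01}[\tau]\cap\delta(U)\subseteq P'_{01}=P''_{01}$ and $P_{10}[\tau]\cap\delta(U)\subseteq P'_{10}=P''_{10}$.
   Context: For a finite set $W$, $P_W=\{pq\in W^2\mid p\neq q\}$ and $X_W$ is the set of $x\in\{0,1\}^{P_W}$ with $x_{pq}+x_{qr}-x_{pr}\le1$ for all pairwise distinct $p,q,r\in W$. A partial function $\tilde x$ on $P_W$ is a map from $\operatorname{dom}(\tilde x)\subseteq P_W$ to $\{0,1\}$, $\tilde x^{-1}(b)$ the pairs mapped to $b$, $X_W[\tilde x]=\{x\in X_W\mid x_{pq}=\tilde x_{pq}\ \forall pq\in\operatorname{dom}(\tilde x)\}$; convention $\tilde x_{aa}=1$, $x_{aa}=1$, $y_{aa}=1$ for all $a$. A pair is decided if it has the same value in all completions; $\tilde x$ is maximally specific if $X_W[\tilde x]\ne\emptyset$ and the decided pairs are exactly $\operatorname{dom}(\tilde x)$. $\hat x|_{P_U}$ has domain $\operatorname{dom}(\hat x)\cap P_U$. $\delta(U)=(U\times(V\setminus U))\cup((V\setminus U)\times U)$. For $x\in X_V[\hat x]$ define vectors in $\{0,1\}^{P_V}$: $\tau^y_{\mathrm{out}}(x)_{pq}$ equals $y_{pq}$ if $pq\in P_U$; $0$ if $pq\in U\times(V\setminus U)$; for $pq\in(V\setminus U)\times U$, $1$ if $\exists r\in U: x_{pr}=1\wedge y_{rq}=1$ and $0$ otherwise; $x_{pq}$ if $pq\in P_{V\setminus U}$. $\tau^y_{\mathrm{in}}(x)_{pq}$ equals $y_{pq}$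 if $pq\in P_U$; $0$ if $pq\in(V\setminus U)\times U$; for $pq\in U\times(V\setminus U)$, $1$ if $\exists r\in U: y_{pr}=1\wedge x_{rq}=1$ and $0$ otherwise; $x_{pq}$ if $pq\in P_{V\setminus U}$. $\tau^y_{\mathrm{bd}}(x)_{pq}$ equals $y_{pq}$ if $pq\in P_U$; $0$ if $pq\in\delta(U)$; $x_{pq}$ if $pq\in P_{V\setminus U}$. For a map $\tau$ on $X_V[\hat x]$ and $a,b\in\{0,1\}$, $P_{ab}[\tau]=\{e\in P_V\mid\exists x\in X_V[\hat x]: x_e=a\wedge\tau(x)_e=b\}$. *)

theory Defs
  imports Main
begin

definition P :: "'a set \<Rightarrow> ('a \<times> 'a) set" where
  "P W = {(p, q). p \<in> W \<and> q \<in> W \<and> p \<noteq> q}"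

(* 0/1 vectors indexed by P_W are total functions, 0 outside P_W (extensional) *)
definition X :: "'a set \<Rightarrow> ('a \<times> 'a \<Rightarrow> nat) set" where
  "X W = {x. (\<forall>e. e \<notin> P W \<longrightarrow> x e = 0) \<and> (\<forall>e\<in>P W. x e \<in> {0, 1}) \<and>
            (\<forall>p\<in>W. \<forall>q\<in>W. \<forall>r\<in>W. p \<noteq> q \<and> q \<noteq> r \<and> p \<noteq> r \<longrightarrow>
                x (p, q) + x (q, r) \<le> 1 + x (p, r))}"

definition partial_fun :: "'a set \<Rightarrow> ('a \<times> 'a \<Rightarrow> nat option) \<Rightarrow> bool" where
  "partial_fun W xh \<longleftrightarrow> dom xh \<subseteq> P W \<and> ran xh \<subseteq> {0, 1}"

definition Xc :: "'a set \<Rightarrow> ('a \<times> 'a \<Rightarrow> nat option) \<Rightarrow> ('a \<times> 'a \<Rightarrow> nat) set" where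
  "Xc W xh = {x \<in> X W. \<forall>e\<in>dom xh. xh e = Some (x e)}"

definition decided :: "'a set \<Rightarrow> ('a \<times> 'a \<Rightarrow> nat option) \<Rightarrow> 'a \<times> 'a \<Rightarrow> bool" where
  "decided W xh e \<longleftrightarrow> (\<exists>b. \<forall>x\<in>Xc W xh. x e = b)"

definition max_specific :: "'a set \<Rightarrow> ('a \<times> 'a \<Rightarrow> nat option) \<Rightarrow> bool" where
  "max_specific W xh \<longleftrightarrow> partial_fun W xh \<and> Xc W xh \<noteq> {} \<and>
     {e \<in> P W. decided W xh e} = dom xh"

definition val :: "('a \<times> 'a \<Rightarrow> nat) \<Rightarrow> 'a \<Rightarrow> 'a \<Rightarrow> nat" where
  "val x p q = (if p = q then 1 else x (p, q))"

definition pval :: "('a \<times> 'a \<Rightarrow> nat option) \<Rightarrow> 'a \<Rightarrow> 'a \<Rightarrow> nat option" where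
  "pval xh p q = (if p = q then Some 1 else xh (p, q))"

definition preim :: "('a \<times> 'a \<Rightarrow> nat option) \<Rightarrow> nat \<Rightarrow> ('a \<times> 'a) set" where
  "preim xh b = {e. xh e = Some b}"

definition delta :: "'a set \<Rightarrow> 'a set \<Rightarrow> ('a \<times> 'a) set" where
  "delta V U = (U \<times> (V - U)) \<union> ((V - U) \<times> U)"

definition tau_out :: "'a set \<Rightarrow> 'a set \<Rightarrow> ('a \<times> 'a \<Rightarrow> nat) \<Rightarrow> ('a \<times> 'a \<Rightarrow> nat) \<Rightarrow> 'a \<times> 'a \<Rightarrow> nat" where
  "tau_out V U y x e = (case e of (p, q) \<Rightarrow>
     if (p, q) \<in> P U then y (p, q)
     else if (p, q) \<in> U \<times> (V - U) then 0
     else if (p, q) \<in> (V - U) \<times> U then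
       (if \<exists>r\<in>U. val x p r = 1 \<and> val y r q = 1 then 1 else 0)
     else if (p, q) \<in> P (V - U) then x (p, q)
     else 0)"

definition tau_in :: "'a set \<Rightarrow> 'a set \<Rightarrow> ('a \<times> 'a \<Rightarrow> nat) \<Rightarrow> ('a \<times> 'a \<Rightarrow> nat) \<Rightarrow> 'a \<times> 'a \<Rightarrow> nat" where
  "tau_in V U y x e = (case e of (p, q) \<Rightarrow>
     if (p, q) \<in> P U then y (p, q)
     else if (p, q) \<in> (V - U) \<times> U then 0
     else if (p, q) \<in> U \<times> (V - U) then
       (if \<exists>r\<in>U. val y p r = 1 \<and> val x r q = 1 then 1 else 0)
     else if (p, q) \<in> P (V - U) then x (p, q)
     else 0)"

definition tau_bd :: "'a set \<Rightarrow> 'a set \<Rightarrow> ('a \<times> 'a \<Rightarrow> nat) \<Rightarrow> ('a \<times> 'a \<Rightarrow> nat) \<Rightarrow> 'a \<times> 'a \<Rightarrow> nat" where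
  "tau_bd V U y x e = (case e of (p, q) \<Rightarrow>
     if (p, q) \<in> P U then y (p, q)
     else if (p, q) \<in> delta V U then 0
     else if (p, q) \<in> P (V - U) then x (p, q)
     else 0)"

definition Pab :: "'a set \<Rightarrow> ('a \<times> 'a \<Rightarrow> nat option) \<Rightarrow>
    (('a \<times> 'a \<Rightarrow> nat) \<Rightarrow> 'a \<times> 'a \<Rightarrow> nat) \<Rightarrow> nat \<Rightarrow> nat \<Rightarrow> ('a \<times> 'a) set" where
  "Pab V xh tau a b = {e \<in> P V. \<exists>x\<in>Xc V xh. x e = a \<and> tau x e = b}"

end

theory Submission
  imports Defs
begin

text \<open>On \<open>\<delta>(U)\<close> each \<open>\<tau>\<close> is either constantly 0 or,
  on one side, equal to 1 exactly when some \<open>r \<in> U\<close> links the pair through \<open>x\<close> and \<open>y\<close>; a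
  completion \<open>x\<close> agrees with \<open>x\<^sub>h\<close> on its domain, so \<open>x\<^sub>p\<^sub>r = 1\<close> forces \<open>x\<^sub>h(p,r) \<noteq> 0\<close>, and
  \<open>x\<^sub>e = a\<close> keeps \<open>e\<close> out of \<open>x\<^sub>h\<^sup>-\<^sup>1(b)\<close> for \<open>b \<noteq> a\<close>.\<close>

lemma Xc_agrees: "x \<in> Xc V xh \<Longrightarrow> xh e = Some b \<Longrightarrow> x e = b"
  by (force simp: Xc_def)

lemma Xc_pval_ne_0: "x \<in> Xc V xh \<Longrightarrow> val x p r = 1 \<Longrightarrow> pval xh p r \<noteq> Some 0"
  by (auto simp: val_def pval_def dest: Xc_agrees)

lemma Pab_disjoint_preim: "a \<noteq> c \<Longrightarrow> Pab V xh tau a b \<inter> preim xh c = {}"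
  by (auto simp: Pab_def preim_def dest: Xc_agrees)

lemma tau_out_U_outside: "p \<in> U \<Longrightarrow> q \<in> V - U \<Longrightarrow> tau_out V U y x (p, q) = 0"
  by (simp add: tau_out_def P_def)

lemma tau_out_outside_U_eq_1:
  "p \<in> V - U \<Longrightarrow> q \<in> U \<Longrightarrow>
    tau_out V U y x (p, q) = 1 \<longleftrightarrow> (\<exists>r\<in>U. val x p r = 1 \<and> val y r q = 1)"
  by (simp add: tau_out_def P_def)

lemma tau_in_outside_U: "p \<in> V - U \<Longrightarrow> q \<in> U \<Longrightarrow> tau_in V U y x (p, q) = 0"
  by (simp add: tau_in_def P_def)

lemma tau_in_U_outside_eq_1:
  "p \<in> U \<Longrightarrow> q \<in> V - U \<Longrightarrow>
    tau_in V U y x (p, q) = 1 \<longleftrightarrow> (\<exists>r\<in>U. val y p r = 1 \<and> val x r q = 1)"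
  by (simp add: tau_in_def P_def)

lemma tau_bd_delta: "e \<in> delta V U \<Longrightarrow> tau_bd V U y x e = 0"
  by (cases e) (auto simp: tau_bd_def delta_def P_def)

lemma Pab_tau_out_to_1:
  "Pab V xh (tau_out V U y) a 1 \<inter> delta V U
     \<subseteq> {(p, q) \<in> (V - U) \<times> U. \<exists>r\<in>U. pval xh p r \<noteq> Some 0 \<and> val y r q = 1}"
proof
  fix e assume e: "e \<in> Pab V xh (tau_out V U y) a 1 \<inter> delta V U"
  obtain p q where [simp]: "e = (p, q)" by fastforce
  from e obtain x where x: "x \<in> Xc V xh" and t: "tau_out V U y x (p, q) = 1"
    by (auto simp: Pab_def)
  from e t have pq: "p \<in> V - U" "q \<in> U"
    by (auto simp: delta_def tau_out_U_outside)
  obtain r where "r \<in> U" "val x p r = 1" "val y r q = 1"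
    using t tau_out_outside_U_eq_1[OF pq] by blast
  moreover from x \<open>val x p r = 1\<close> have "pval xh p r \<noteq> Some 0"
    by (rule Xc_pval_ne_0)
  ultimately show "e \<in> {(p, q) \<in> (V - U) \<times> U. \<exists>r\<in>U. pval xh p r \<noteq> Some 0 \<and> val y r q = 1}"
    using pq by auto
qed

lemma Pab_tau_out_1_to_0: "Pab V xh (tau_out V U y) 1 0 \<inter> delta V U \<subseteq> U \<times> (V - U)"
proof
  fix e assume e: "e \<in> Pab V xh (tau_out V U y) 1 0 \<inter> delta V U"
  obtain p q where [simp]: "e = (p, q)" by fastforce
  from e obtain x where x1: "x (p, q) = 1" and t: "tau_out V U y x (p, q) = 0"
    by (auto simp: Pab_def)
  have "\<not> (p \<in> V - U \<and> q \<in> U)"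
  proof
    assume pq: "p \<in> V - U \<and> q \<in> U"
    with x1 have "val x p q = 1" "val y q q = 1"
      by (auto simp: val_def)
    with pq have "tau_out V U y x (p, q) = 1"
      using tau_out_outside_U_eq_1[of p V U q y x] by blast
    with t show False by simp
  qed
  with e show "e \<in> U \<times> (V - U)"
    by (auto simp: delta_def)
qed

lemma Pab_tau_in_to_1:
  "Pab V xh (tau_in V U y) a 1 \<inter> delta V U
     \<subseteq> {(p, q) \<in> U \<times> (V - U). \<exists>r\<in>U. val y p r = 1 \<and> pval xh r q \<noteq> Some 0}"
proof
  fix e assume e: "e \<in> Pab V xh (tau_in V U y) a 1 \<inter> delta V U"
  obtain p q where [simp]: "e = (p, q)" by fastforce
  from e obtain x where x: "x \<in> Xc V xh" and t: "tau_in V U y x (p, q) = 1"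
    by (auto simp: Pab_def)
  from e t have pq: "p \<in> U" "q \<in> V - U"
    by (auto simp: delta_def tau_in_outside_U)
  obtain r where "r \<in> U" "val y p r = 1" "val x r q = 1"
    using t tau_in_U_outside_eq_1[OF pq] by blast
  moreover from x \<open>val x r q = 1\<close> have "pval xh r q \<noteq> Some 0"
    by (rule Xc_pval_ne_0)
  ultimately show "e \<in> {(p, q) \<in> U \<times> (V - U). \<exists>r\<in>U. val y p r = 1 \<and> pval xh r q \<noteq> Some 0}"
    using pq by auto
qed

lemma Pab_tau_in_1_to_0: "Pab V xh (tau_in V U y) 1 0 \<inter> delta V U \<subseteq> (V - U) \<times> U"
proof
  fix e assume e: "e \<in> Pab V xh (tau_in V U y) 1 0 \<inter> delta V U"
  obtain p q where [simp]: "e = (p, q)" by fastforce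
  from e obtain x where x1: "x (p, q) = 1" and t: "tau_in V U y x (p, q) = 0"
    by (auto simp: Pab_def)
  have "\<not> (p \<in> U \<and> q \<in> V - U)"
  proof
    assume pq: "p \<in> U \<and> q \<in> V - U"
    with x1 have "val y p p = 1" "val x p q = 1"
      by (auto simp: val_def)
    with pq have "tau_in V U y x (p, q) = 1"
      using tau_in_U_outside_eq_1[of p U q V y x] by blast
    with t show False by simp
  qed
  with e show "e \<in> (V - U) \<times> U"
    by (auto simp: delta_def)
qed

lemma Pab_tau_bd_to_1: "Pab V xh (tau_bd V U y) a 1 \<inter> delta V U = {}"
  by (auto simp: Pab_def tau_bd_delta)

theorem lemma7p3:
  fixes V U :: "'a set" and xh :: "'a \<times> 'a \<Rightarrow> nat option" and y :: "'a \<times> 'a \<Rightarrow> nat"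
  assumes "finite V" and "V \<noteq> {}" and "U \<subseteq> V"
    and "max_specific V xh"
    and "y \<in> Xc U (xh |` P U)"
  shows
    "(Pab V xh (tau_out V U y) 0 1 \<inter> delta V U
        \<subseteq> {(p, q) \<in> (V - U) \<times> U. \<exists>r\<in>U. pval xh p r \<noteq> Some 0 \<and> val y r q = 1} - preim xh 1
     \<and> {(p, q) \<in> (V - U) \<times> U. \<exists>r\<in>U. pval xh p r \<noteq> Some 0 \<and> val y r q = 1} - preim xh 1
        \<subseteq> ((V - U) \<times> U) - preim xh 1
     \<and> Pab V xh (tau_out V U y) 1 0 \<inter> delta V U \<subseteq> (U \<times> (V - U)) - preim xh 0)
   \<and>
    (Pab V xh (tau_in V U y) 0 1 \<inter> delta V U
        \<subseteq> {(p, q) \<in> U \<times> (V - U). \<exists>r\<in>U. val y p r = 1 \<and> pval xh r q \<noteq> Some 0} - preim xh 1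
     \<and> {(p, q) \<in> U \<times> (V - U). \<exists>r\<in>U. val y p r = 1 \<and> pval xh r q \<noteq> Some 0} - preim xh 1
        \<subseteq> (U \<times> (V - U)) - preim xh 1
     \<and> Pab V xh (tau_in V U y) 1 0 \<inter> delta V U \<subseteq> ((V - U) \<times> U) - preim xh 0)
   \<and>
    (Pab V xh (tau_bd V U y) 0 1 \<inter> delta V U \<subseteq> {}
     \<and> Pab V xh (tau_bd V U y) 1 0 \<inter> delta V U \<subseteq> delta V U - preim xh 0)"
proof -
  have completions_respect_xh: "Pab V xh tau 0 b \<inter> preim xh 1 = {}" "Pab V xh tau 1 b \<inter> preim xh 0 = {}"
    for tau :: "('a \<times> 'a \<Rightarrow> nat) \<Rightarrow> 'a \<times> 'a \<Rightarrow> nat" and b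
    by (simp_all add: Pab_disjoint_preim)
  show ?thesis
    using completions_respect_xh
      Pab_tau_out_to_1[of V xh U y 0] Pab_tau_out_1_to_0[of V xh U y]
      Pab_tau_in_to_1[of V xh U y 0] Pab_tau_in_1_to_0[of V xh U y]
      Pab_tau_bd_to_1[of V xh U y 0]
    by (intro conjI; blast)
qed

end
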